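(* Let $\eta>0$ and $\beta\in\mathbb{R}$. Let $\widehat{\mathcal{L}}_1,\widehat{\mathcal{L}}_2\in\mathbb{R}^{N\times N}$ satisfy $\langle \widehat{\mathcal{L}}_i\mathbf{x},\mathbf{x}\rangle\le 0$ for all $\mathbf{x}\in\mathbb{R}^N$ and $i=1,2$, and additionally $\langle \widehat{\mathcal{L}}_1\mathbf{w},\widehat{\mathcal{L}}_2\mathbf{w}\rangle\ge 0$ for all $\mathbf{w}\in\mathbb{R}^N$. Set $\gamma_*:=\frac{\eta^2+\beta^2}{\eta}$ and $$\mathcal{P}_{\gamma_*}:=\left[\eta I-\widehat{\mathcal{L}}_2+\beta^2(\eta I-\widehat{\mathcal{L}}_1)^{-1}\right](\gamma_* I-\widehat{\mathcal{L}}_2)^{-1}.$$ Then $\mathcal{P}_{\gamma_*}$ is invertible and its two-norm condition number satisfies $$\kappa(\mathcal{P}_{\gamma_*})=\|\mathcal{P}_{\gamma_*}\|\,\|\mathcal{P}_{\gamma_*}^{-1}\|\le 2+\frac{\beta^2}{\eta^2}.$$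
   Context: $\langle\cdot,\cdot\rangle$ and $\|\cdot\|$ denote the Euclidean inner product and the induced vector norm / operator two-norm on $\mathbb{R}^N$. The hypothesis $\langle \widehat{\mathcal{L}}_i\mathbf{x},\mathbf{x}\rangle\le 0$ for all $\mathbf{x}$ (field of values in the closed left half plane) guarantees that $\eta I-\widehat{\mathcal{L}}_1$ and $\gamma I-\widehat{\mathcal{L}}_2$ are invertible for $\eta,\gamma>0$. The operator $\mathcal{P}_{\gamma_*}$ is the Schur complement $\eta I-\widehat{\mathcal{L}}_2+\beta^2(\eta I-\widehat{\mathcal{L}}_1)^{-1}$ of the block matrix $\begin{bmatrix}\eta I-\widehat{\mathcal{L}}_1 & \phi I\\ -\frac{\beta^2}{\phi}I & \eta I-\widehat{\mathcal{L}}_2\end{bmatrix}$ ($\phi\neq0$), right-preconditioned by $(\gamma_* I-\widehat{\mathcal{L}}_2)^{-1}$. *)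

theory Defs
  imports "HOL-Analysis.Analysis"
begin

definition opnorm2 :: "real^'n^'n \<Rightarrow> real" where
  "opnorm2 A = onorm (\<lambda>x. A *v x)"

definition cond2 :: "real^'n^'n \<Rightarrow> real" where
  "cond2 A = opnorm2 A * opnorm2 (matrix_inv A)"

end

theory Submission
  imports Defs
begin

text \<open>
  Write \<open>A = \<eta>I - L\<^sub>1\<close>, \<open>C = \<gamma>\<^sub>*I - L\<^sub>2\<close> and \<open>t = \<beta>\<^sup>2/\<eta>\<close>, so that \<open>\<gamma>\<^sub>* = \<eta> + t\<close>.
  Since \<open>\<eta>I - L\<^sub>2 + \<beta>\<^sup>2A\<^sup>-\<^sup>1 = M A\<^sup>-\<^sup>1\<close> with \<open>M = (\<eta>I - L\<^sub>2)A + \<beta>\<^sup>2I\<close>, the operator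
  \<open>P\<^sub>\<gamma>\<^sub>*\<close> maps \<open>CAw\<close> to \<open>Mw\<close>, and \<open>CA = M - tL\<^sub>1\<close>. The hypotheses make
  \<open>\<langle>Mw, L\<^sub>1w\<rangle> \<le> 0\<close>, hence \<open>\<parallel>Mw\<parallel> \<le> \<parallel>CAw\<parallel>\<close>, i.e. \<open>\<parallel>P\<^sub>\<gamma>\<^sub>*\<parallel> \<le> 1\<close>. Conversely
  \<open>\<parallel>CAw\<parallel> \<le> \<parallel>Mw\<parallel> + t\<parallel>L\<^sub>1w\<parallel>\<close> and \<open>\<gamma>\<^sub>*\<parallel>L\<^sub>1w\<parallel> \<le> \<gamma>\<^sub>*\<parallel>Aw\<parallel> \<le> \<parallel>CAw\<parallel>\<close> give
  \<open>\<eta>\<parallel>CAw\<parallel> \<le> \<gamma>\<^sub>*\<parallel>Mw\<parallel>\<close>, i.e. \<open>\<parallel>P\<^sub>\<gamma>\<^sub>*\<^sup>-\<^sup>1\<parallel> \<le> \<gamma>\<^sub>*/\<eta> = 1 + \<beta>\<^sup>2/\<eta>\<^sup>2\<close>.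
\<close>

lemma norm_le_norm_diff_if_inner_nonpos:
  fixes a b :: "'a::real_inner"
  assumes "a \<bullet> b \<le> 0"
  shows "norm a \<le> norm (a - b)" and "norm b \<le> norm (a - b)"
proof -
  have expand: "(norm (a - b))\<^sup>2 = (norm a)\<^sup>2 - 2 * (a \<bullet> b) + (norm b)\<^sup>2"
    unfolding power2_norm_eq_inner
    by (simp add: inner_diff_left inner_diff_right inner_commute[of b a])
  have "(norm a)\<^sup>2 \<le> (norm (a - b))\<^sup>2" "(norm b)\<^sup>2 \<le> (norm (a - b))\<^sup>2"
    unfolding expand using assms zero_le_power2[of "norm a"] zero_le_power2[of "norm b"]
    by linarith+
  then show "norm a \<le> norm (a - b)" "norm b \<le> norm (a - b)"
    by (auto intro: power2_le_imp_le)
qed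

lemma shifted_matrix_vector_mult:
  fixes L :: "real^'n^'n"
  shows "(s *\<^sub>R mat 1 - L) *v x = s *\<^sub>R x - L *v x"
  by (simp add: matrix_vector_mult_diff_rdistrib scaleR_matrix_vector_assoc[symmetric])

lemma norm_shifted_matrix_vector_mult_ge:
  fixes L :: "real^'n^'n"
  assumes "\<And>x. (L *v x) \<bullet> x \<le> 0" and "s \<ge> 0"
  shows "s * norm x \<le> norm ((s *\<^sub>R mat 1 - L) *v x)"
    and "norm (L *v x) \<le> norm ((s *\<^sub>R mat 1 - L) *v x)"
proof -
  have "(s *\<^sub>R x) \<bullet> (L *v x) \<le> 0"
    using assms by (simp add: inner_commute mult_nonneg_nonpos)
  from norm_le_norm_diff_if_inner_nonpos[OF this] show
    "s * norm x \<le> norm ((s *\<^sub>R mat 1 - L) *v x)"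
    "norm (L *v x) \<le> norm ((s *\<^sub>R mat 1 - L) *v x)"
    using \<open>s \<ge> 0\<close> by (simp_all add: shifted_matrix_vector_mult)
qed

lemma invertible_if_norm_bounded_below:
  fixes A :: "real^'n^'n"
  assumes "c > 0" and "\<And>x. c * norm x \<le> norm (A *v x)"
  shows "invertible A"
proof -
  have "inj ((*v) A)"
  proof (rule injI)
    fix x y
    assume "A *v x = A *v y"
    then have "c * norm (x - y) \<le> 0"
      using assms(2)[of "x - y"] by (simp add: matrix_vector_mult_diff_distrib)
    then show "x = y"
      using \<open>c > 0\<close> by (simp add: mult_le_0_iff)
  qed
  then show ?thesis
    using invertible_left_inverse matrix_left_invertible_injective by blast
qed

lemma matrix_vector_mult_matrix_inv:
  fixes A :: "real^'n^'n"
  assumes "invertible A"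
  shows "A *v (matrix_inv A *v x) = x" and "matrix_inv A *v (A *v x) = x"
proof -
  have "A ** matrix_inv A = mat 1 \<and> matrix_inv A ** A = mat 1"
    using assms unfolding invertible_def matrix_inv_def by (rule someI_ex)
  then show "A *v (matrix_inv A *v x) = x" "matrix_inv A *v (A *v x) = x"
    by (simp_all add: matrix_vector_mul_assoc)
qed

lemma opnorm2_nonneg: "opnorm2 A \<ge> 0"
  unfolding opnorm2_def by (rule onorm_pos_le) (rule matrix_vector_mul_bounded_linear)

lemma invertible_cond2_le_if_norm_bounds:
  fixes P :: "real^'n^'n"
  assumes "a > 0"
    and lower: "\<And>x. a * norm x \<le> norm (P *v x)"
    and upper: "\<And>x. norm (P *v x) \<le> b * norm x"
  shows "invertible P" and "cond2 P \<le> b / a"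
proof -
  show P: "invertible P"
    using \<open>a > 0\<close> lower by (rule invertible_if_norm_bounded_below)
  have "opnorm2 P \<le> b"
    unfolding opnorm2_def using upper by (rule onorm_le)
  moreover have "opnorm2 (matrix_inv P) \<le> 1 / a"
    unfolding opnorm2_def
  proof (rule onorm_le)
    fix x
    show "norm (matrix_inv P *v x) \<le> 1 / a * norm x"
      using lower[of "matrix_inv P *v x"] \<open>a > 0\<close>
      by (simp add: matrix_vector_mult_matrix_inv[OF P] field_simps)
  qed
  ultimately have "cond2 P \<le> b * (1 / a)"
    unfolding cond2_def using opnorm2_nonneg[of P] opnorm2_nonneg[of "matrix_inv P"]
    by (intro mult_mono) auto
  then show "cond2 P \<le> b / a"
    by simp
qed

lemma shifted_product_inner_nonpos:
  fixes L1 L2 :: "real^'n^'n"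
  assumes "\<eta> \<ge> 0" and "c \<ge> 0"
    and neg1: "\<And>x. (L1 *v x) \<bullet> x \<le> 0"
    and neg2: "\<And>x. (L2 *v x) \<bullet> x \<le> 0"
    and cross: "\<And>w. (L1 *v w) \<bullet> (L2 *v w) \<ge> 0"
  shows "((\<eta> *\<^sub>R mat 1 - L2) *v ((\<eta> *\<^sub>R mat 1 - L1) *v w) + c *\<^sub>R w) \<bullet> (L1 *v w) \<le> 0"
proof -
  define v where "v = L1 *v w"
  have "(\<eta> *\<^sub>R mat 1 - L2) *v ((\<eta> *\<^sub>R mat 1 - L1) *v w) + c *\<^sub>R w
      = (\<eta>\<^sup>2 + c) *\<^sub>R w - \<eta> *\<^sub>R v - \<eta> *\<^sub>R (L2 *v w) + L2 *v v"
    unfolding shifted_matrix_vector_mult v_def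
    by (simp add: matrix_vector_mult_diff_distrib matrix_vector_mult_scaleR
        scaleR_diff_right scaleR_add_left power2_eq_square)
  also have "\<dots> \<bullet> v = (\<eta>\<^sup>2 + c) * (w \<bullet> v) - \<eta> * (v \<bullet> v) - \<eta> * ((L2 *v w) \<bullet> v)
      + (L2 *v v) \<bullet> v"
    by (simp add: inner_diff_left inner_add_left)
  also have "\<dots> \<le> 0"
  proof -
    have "(\<eta>\<^sup>2 + c) * (w \<bullet> v) \<le> 0"
      using neg1[of w] \<open>c \<ge> 0\<close> by (simp add: v_def inner_commute mult_nonneg_nonpos)
    moreover have "\<eta> * ((L2 *v w) \<bullet> v) \<ge> 0"
      using cross[of w] \<open>\<eta> \<ge> 0\<close> by (simp add: v_def inner_commute)
    moreover have "\<eta> * (v \<bullet> v) \<ge> 0"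
      using \<open>\<eta> \<ge> 0\<close> by simp
    ultimately show ?thesis
      using neg2[of v] by linarith
  qed
  finally show ?thesis
    unfolding v_def .
qed

lemma shifted_product_norm_bounds:
  fixes L1 L2 :: "real^'n^'n" and \<eta> \<beta> :: real and w :: "real^'n"
  assumes "\<eta> > 0"
    and neg1: "\<And>x. (L1 *v x) \<bullet> x \<le> 0"
    and neg2: "\<And>x. (L2 *v x) \<bullet> x \<le> 0"
    and cross: "\<And>w. (L1 *v w) \<bullet> (L2 *v w) \<ge> 0"
  defines "\<gamma> \<equiv> (\<eta>\<^sup>2 + \<beta>\<^sup>2) / \<eta>"
  defines "m \<equiv> (\<eta> *\<^sub>R mat 1 - L2) *v ((\<eta> *\<^sub>R mat 1 - L1) *v w) + \<beta>\<^sup>2 *\<^sub>R w"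
    and "z \<equiv> (\<gamma> *\<^sub>R mat 1 - L2) *v ((\<eta> *\<^sub>R mat 1 - L1) *v w)"
  shows "norm m \<le> norm z" and "\<eta> * norm z \<le> \<gamma> * norm m"
proof -
  define t where "t = \<beta>\<^sup>2 / \<eta>"
  have "t \<ge> 0" and "\<gamma> = \<eta> + t" and "t * \<eta> = \<beta>\<^sup>2"
    using \<open>\<eta> > 0\<close> by (simp_all add: t_def \<gamma>_def add_divide_distrib power2_eq_square)
  have z_eq: "z = m - t *\<^sub>R (L1 *v w)"
    using \<open>t * \<eta> = \<beta>\<^sup>2\<close> unfolding z_def m_def \<open>\<gamma> = \<eta> + t\<close> shifted_matrix_vector_mult
    by (simp add: matrix_vector_mult_diff_distrib matrix_vector_mult_scaleR
        scaleR_diff_right scaleR_add_left distrib_right)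
  have "m \<bullet> (t *\<^sub>R (L1 *v w)) \<le> 0"
    using shifted_product_inner_nonpos[OF _ _ neg1 neg2 cross, of \<eta> "\<beta>\<^sup>2" w]
      \<open>\<eta> > 0\<close> \<open>t \<ge> 0\<close> by (simp add: m_def mult_nonneg_nonpos)
  then show "norm m \<le> norm z"
    unfolding z_eq by (rule norm_le_norm_diff_if_inner_nonpos)
  have "\<gamma> * norm (L1 *v w) \<le> \<gamma> * norm ((\<eta> *\<^sub>R mat 1 - L1) *v w)"
    using norm_shifted_matrix_vector_mult_ge(2)[OF neg1, of \<eta> w] \<open>\<eta> > 0\<close> \<open>\<gamma> = \<eta> + t\<close> \<open>t \<ge> 0\<close>
    by (simp add: mult_left_mono)
  also have "\<dots> \<le> norm z"
    unfolding z_def using \<open>\<eta> > 0\<close> \<open>\<gamma> = \<eta> + t\<close> \<open>t \<ge> 0\<close>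
    by (simp add: norm_shifted_matrix_vector_mult_ge(1)[OF neg2])
  finally have "t * (\<gamma> * norm (L1 *v w)) \<le> t * norm z"
    using \<open>t \<ge> 0\<close> by (simp add: mult_left_mono)
  moreover have "\<gamma> * norm z \<le> \<gamma> * (norm m + t * norm (L1 *v w))"
    using norm_triangle_ineq4[of m "t *\<^sub>R (L1 *v w)"] \<open>t \<ge> 0\<close> \<open>\<eta> > 0\<close> \<open>\<gamma> = \<eta> + t\<close>
    unfolding z_eq by (simp add: mult_left_mono)
  ultimately show "\<eta> * norm z \<le> \<gamma> * norm m"
    unfolding \<open>\<gamma> = \<eta> + t\<close> by (simp add: algebra_simps)
qed

theorem theorem3:
  fixes L1 L2 :: "real^'n^'n" and \<eta> \<beta> :: real
  assumes eta_pos: "\<eta> > 0"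
    and neg1: "\<And>x. (L1 *v x) \<bullet> x \<le> 0"
    and neg2: "\<And>x. (L2 *v x) \<bullet> x \<le> 0"
    and cross: "\<And>w. (L1 *v w) \<bullet> (L2 *v w) \<ge> 0"
  defines "\<gamma> \<equiv> (\<eta>\<^sup>2 + \<beta>\<^sup>2) / \<eta>"
  defines "P \<equiv> (\<eta> *\<^sub>R mat 1 - L2 + \<beta>\<^sup>2 *\<^sub>R matrix_inv (\<eta> *\<^sub>R mat 1 - L1))
                  ** matrix_inv (\<gamma> *\<^sub>R mat 1 - L2)"
  shows "invertible P \<and> cond2 P \<le> 2 + \<beta>\<^sup>2 / \<eta>\<^sup>2"
proof -
  define A where "A = \<eta> *\<^sub>R mat 1 - L1"
  define C where "C = \<gamma> *\<^sub>R mat 1 - L2"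
  have "\<gamma> > 0"
    using eta_pos by (simp add: \<gamma>_def add_pos_nonneg)
  have A: "invertible A"
    unfolding A_def using eta_pos norm_shifted_matrix_vector_mult_ge(1)[OF neg1 less_imp_le[OF eta_pos]]
    by (rule invertible_if_norm_bounded_below)
  have C: "invertible C"
    unfolding C_def using \<open>\<gamma> > 0\<close> norm_shifted_matrix_vector_mult_ge(1)[OF neg2 less_imp_le[OF \<open>\<gamma> > 0\<close>]]
    by (rule invertible_if_norm_bounded_below)
  have P_CA: "P *v (C *v (A *v w)) = (\<eta> *\<^sub>R mat 1 - L2) *v (A *v w) + \<beta>\<^sup>2 *\<^sub>R w" for w
    unfolding P_def A_def[symmetric] C_def[symmetric]
    by (simp add: matrix_vector_mul_assoc[symmetric] matrix_vector_mult_add_rdistrib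
        scaleR_matrix_vector_assoc[symmetric] matrix_vector_mult_matrix_inv A C)
  have "\<eta> / \<gamma> * norm z \<le> norm (P *v z) \<and> norm (P *v z) \<le> 1 * norm z" for z
  proof -
    obtain w where "z = C *v (A *v w)"
      using matrix_vector_mult_matrix_inv(1)[OF C] matrix_vector_mult_matrix_inv(1)[OF A] by metis
    moreover note shifted_product_norm_bounds[OF eta_pos neg1 neg2 cross, where \<beta> = \<beta> and w = w,
        folded \<gamma>_def A_def C_def]
    ultimately show ?thesis
      using \<open>\<gamma> > 0\<close> by (simp add: P_CA add.commute field_simps)
  qed
  then have "invertible P" and "cond2 P \<le> 1 / (\<eta> / \<gamma>)"
    using invertible_cond2_le_if_norm_bounds[of "\<eta> / \<gamma>" P 1] eta_pos \<open>\<gamma> > 0\<close> by auto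
  moreover have "1 / (\<eta> / \<gamma>) = 1 + \<beta>\<^sup>2 / \<eta>\<^sup>2"
    using eta_pos by (simp add: \<gamma>_def field_simps power2_eq_square)
  ultimately show ?thesis
    by simp
qed

end
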